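(* Let $\mathbf{A}\in\mathbb{R}^{m\times n}$, $\mathbf{c}\in\mathbb{R}^m$ and $0<\epsilon\le1$. Let $\mathbf{x}$ be any solution to the LSA instance $(\mathbf{A},\mathbf{c},\epsilon)$, and output YES if $\|\mathbf{A}\mathbf{x}-\mathbf{c}\|_2\le\epsilon\|\mathbf{c}\|_2$ and NO otherwise. Then this output is a correct answer to the LSD problem for $(\mathbf{A},\mathbf{c},\epsilon)$.
   Context: $\boldsymbol{\Pi}_{\mathbf{A}}$ is the orthogonal projection onto the image of $\mathbf{A}$. A solution to the LSA instance $(\mathbf{A},\mathbf{c},\epsilon)$ is any $\mathbf{x}\in\mathbb{R}^n$ with $\|\mathbf{A}\mathbf{x}-\boldsymbol{\Pi}_{\mathbf{A}}\mathbf{c}\|_2\le\epsilon\|\boldsymbol{\Pi}_{\mathbf{A}}\mathbf{c}\|_2$. The LSD (linear system decision) problem for $(\mathbf{A},\mathbf{c},\epsilon)$ requires outputting YES if there exists $\mathbf{x}$ with $\mathbf{A}\mathbf{x}=\mathbf{c}$, outputting NO if $\|\mathbf{A}\mathbf{x}-\mathbf{c}\|_2>\epsilon\|\mathbf{c}\|_2$ for all $\mathbf{x}$, and allows any output otherwise. *)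

theory Defs
  imports "HOL-Analysis.Analysis"
begin

definition orth_proj_img :: "real^'n^'m \<Rightarrow> real^'m \<Rightarrow> real^'m" where
  "orth_proj_img A c =
     (THE p. p \<in> range (\<lambda>x. A *v x) \<and> (\<forall>y \<in> range (\<lambda>x. A *v x). (c - p) \<bullet> y = 0))"

definition LSA_solution :: "real^'n^'m \<Rightarrow> real^'m \<Rightarrow> real \<Rightarrow> real^'n \<Rightarrow> bool" where
  "LSA_solution A c eps x \<longleftrightarrow>
     norm (A *v x - orth_proj_img A c) \<le> eps * norm (orth_proj_img A c)"

text \<open>The answer (True = YES, False = NO) is a correct output for the LSD problem (A, c, eps):
  YES is required if A x = c is solvable, NO is required if every x has
  norm (A x - c) > eps * norm c; otherwise either answer is allowed.\<close>
definition LSD_correct :: "real^'n^'m \<Rightarrow> real^'m \<Rightarrow> real \<Rightarrow> bool \<Rightarrow> bool" where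
  "LSD_correct A c eps out \<longleftrightarrow>
     ((\<exists>x. A *v x = c) \<longrightarrow> out = True) \<and>
     ((\<forall>x. norm (A *v x - c) > eps * norm c) \<longrightarrow> out = False)"

end

theory Submission
  imports Defs
begin

text \<open>If c = A x0 is attainable, the projection of c onto the image is c itself, so an
  LSA solution satisfies the YES test; if no x comes within eps * norm c of c, the
  test fails for the LSA solution as for every other vector. Neither argument uses the
  bounds 0 < eps \<le> 1.\<close>

lemma orth_proj_img_of_mem_range:
  fixes A :: "real^'n^'m"
  assumes "A *v x0 = c"
  shows "orth_proj_img A c = c"
  unfolding orth_proj_img_def
proof (rule the_equality)
  show "c \<in> range ((*v) A) \<and> (\<forall>y \<in> range ((*v) A). (c - c) \<bullet> y = 0)"
    using assms by auto
next
  fix p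
  assume p: "p \<in> range ((*v) A) \<and> (\<forall>y \<in> range ((*v) A). (c - p) \<bullet> y = 0)"
  then obtain z where "p = A *v z" by auto
  with assms have "c - p \<in> range ((*v) A)"
    by (metis matrix_vector_mult_diff_distrib rangeI)
  with p have "(c - p) \<bullet> (c - p) = 0" by blast
  then show "p = c" by simp
qed

lemma LSA_solution_of_mem_range:
  assumes "LSA_solution A c eps x" and "A *v x0 = c"
  shows "norm (A *v x - c) \<le> eps * norm c"
  using assms unfolding LSA_solution_def by (simp add: orth_proj_img_of_mem_range)

theorem lemma10p2:
  fixes A :: "real^'n^'m" and c :: "real^'m" and eps :: real and x :: "real^'n"
  assumes "0 < eps" and "eps \<le> 1"
    and "LSA_solution A c eps x"
  shows "LSD_correct A c eps (norm (A *v x - c) \<le> eps * norm c)"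
  unfolding LSD_correct_def
proof (intro conjI impI)
  assume "\<exists>x0. A *v x0 = c"
  then obtain x0 where "A *v x0 = c" ..
  with assms(3) show "(norm (A *v x - c) \<le> eps * norm c) = True"
    by (simp add: LSA_solution_of_mem_range)
next
  assume "\<forall>y. eps * norm c < norm (A *v y - c)"
  then show "(norm (A *v x - c) \<le> eps * norm c) = False"
    by (simp add: not_le)
qed

end
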